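(* A Poisson bracket $\{\cdot,\cdot\}$ on $\widetilde J$ is admissible if and only if its values on the generators are $\{E_4,E_6\}=-2E_4^3+2E_6^2$, $\{A,E_4\}=\alpha E_6A+\gamma E_4B$, $\{A,E_6\}=\beta E_4^2A+\delta E_6B$, $\{B,E_4\}=\lambda E_4^2A+\varepsilon E_6B$, $\{B,E_6\}=\mu E_4E_6A+\theta E_4^2B$, $\{A,B\}=\xi E_4A^2+\eta B^2$, where the complex parameters $(\alpha,\beta,\gamma,\delta,\lambda,\mu,\theta,\varepsilon,\xi,\eta)$ belong to one of the following families (unlisted parameters free): (A) $\gamma\ne0$, $\varepsilon$ arbitrary, $\alpha=\varepsilon$, $\beta=\frac32\varepsilon+1$, $\delta=\gamma$, $\lambda=\frac4\gamma$, $\mu=\frac8\gamma$, $\theta=\frac32\varepsilon-1$, $\xi=\frac{4\varepsilon}\gamma$, $\eta=(-\frac34\varepsilon+\frac12)\gamma$; (B) $\gamma,\lambda,\varepsilon$ arbitrary, $\alpha=\varepsilon+\frac23$, $\beta=\frac32\varepsilon+1$, $\delta=\frac32\gamma$, $\mu=\frac32\lambda$, $\theta=\frac32\varepsilon$, $\xi=(\frac34\varepsilon+\frac12)\lambda$, $\eta=-\frac34\varepsilon\gamma$; (C1) $\alpha=4$, $\beta=6$, $\gamma\ne0$, $\delta=-\gamma$, $\lambda=\mu=\theta=\varepsilon=\xi=\eta=0$; (C2) $\alpha=\beta=\gamma=\delta=0$, $\lambda\ne0$, $\mu=-2\lambda$, $\theta=6$, $\varepsilon=4$, $\xi=\eta=0$;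 (D) $\varepsilon,\eta$ arbitrary, $\alpha=\varepsilon$, $\beta=\frac32\varepsilon$, $\gamma=\delta=\lambda=\mu=0$, $\theta=\frac32\varepsilon$, $\xi=0$; (E) $\varepsilon$ arbitrary, $\alpha\ne\varepsilon+\frac23$, $\beta=\frac32\alpha$, $\gamma=\delta=\lambda=\mu=0$, $\theta=\frac32\varepsilon$, $\xi=\eta=0$.
   Context: Let $\widetilde J=\mathbb{C}[E_4,E_6,A,B]$ be the polynomial algebra in four algebraically independent variables, bigraded by weight and index, where $E_4$ has weight $4$ and index $0$, $E_6$ has weight $6$ and index $0$, $A$ has weight $-2$ and index $1$, $B$ has weight $0$ and index $1$; $\widetilde J_{k,p}$ denotes the homogeneous component of weight $k$ and index $p$ (the algebra of weak Jacobi forms of even weight). $\mathcal M_*=\mathbb{C}[E_4,E_6]$ with weight-$k$ part $\mathcal M_k$. The Serre derivation $S$ of $\mathcal M_*$ has $S(E_4)=-\frac13E_6$, $S(E_6)=-\frac12E_4^2$, and the first Rankin–Cohen bracket on $\mathcal M_*$ is $\mathrm{RC}_1(f,g)=kfS(g)-\ell gS(f)$ for $f\in\mathcal M_k$, $g\in\mathcal M_\ell$ (equivalently $kfDg-\ell gDf$ with $D=q\,d/dq$). A Poisson bracket on $\widetilde J$ (a skew-symmetric biderivation satisfying the Jacobi identity) is admissible if (1) $\{f,g\}=\mathrm{RC}_1(f,g)$ for all $f,g\in\mathcal M_*$ and (2) $\{\widetilde J_{k,p},\widetilde J_{\ell,q}\}\subset\widetilde J_{k+\ell+2,p+q}$ for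 all weights $k,\ell$ and indices $p,q$. *)

theory Defs
  imports Complex_Main "HOL-Library.Poly_Mapping"
begin

text \<open>Polynomials in the variables X 0 = E4, X 1 = E6, X 2 = A, X 3 = B with complex
coefficients, as finitely supported maps from exponent vectors (monomials) to coefficients.\<close>

type_synonym mono = "nat \<Rightarrow>\<^sub>0 nat"
type_synonym jpoly = "mono \<Rightarrow>\<^sub>0 complex"

definition Var :: "nat \<Rightarrow> jpoly" where
  "Var i = Poly_Mapping.single (Poly_Mapping.single i 1) 1"

definition Cst :: "complex \<Rightarrow> jpoly" where
  "Cst c = Poly_Mapping.single 0 c"

abbreviation E4 :: jpoly where "E4 \<equiv> Var 0"
abbreviation E6 :: jpoly where "E6 \<equiv> Var 1"
abbreviation JA :: jpoly where "JA \<equiv> Var 2"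
abbreviation JB :: jpoly where "JB \<equiv> Var 3"

definition in_Jt :: "jpoly \<Rightarrow> bool" where
  "in_Jt p \<longleftrightarrow> (\<forall>m\<in>Poly_Mapping.keys p. Poly_Mapping.keys m \<subseteq> {0,1,2,3})"

definition mweight :: "mono \<Rightarrow> int" where
  "mweight m = 4 * int (Poly_Mapping.lookup m 0) + 6 * int (Poly_Mapping.lookup m 1) - 2 * int (Poly_Mapping.lookup m 2)"

definition mindex :: "mono \<Rightarrow> nat" where
  "mindex m = Poly_Mapping.lookup m 2 + Poly_Mapping.lookup m 3"

definition Jt :: "int \<Rightarrow> nat \<Rightarrow> jpoly set" where
  "Jt k p = {f. \<forall>m\<in>Poly_Mapping.keys f. Poly_Mapping.keys m \<subseteq> {0,1,2,3} \<and> mweight m = k \<and> mindex m = p}"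

definition Mk :: "int \<Rightarrow> jpoly set" where
  "Mk k = {f. \<forall>m\<in>Poly_Mapping.keys f. Poly_Mapping.keys m \<subseteq> {0,1} \<and> mweight m = k}"

definition Mstar :: "jpoly set" where
  "Mstar = {f. \<forall>m\<in>Poly_Mapping.keys f. Poly_Mapping.keys m \<subseteq> {0,1}}"

definition pderiv_var :: "nat \<Rightarrow> jpoly \<Rightarrow> jpoly" where
  "pderiv_var i p = (\<Sum>m\<in>Poly_Mapping.keys p.
      Poly_Mapping.single (m - Poly_Mapping.single i 1) (of_nat (Poly_Mapping.lookup m i) * Poly_Mapping.lookup p m))"

definition serre :: "jpoly \<Rightarrow> jpoly" where
  "serre f = pderiv_var 0 f * Cst (-1/3) * E6 + pderiv_var 1 f * Cst (-1/2) * E4 ^ 2"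

definition RC1 :: "int \<Rightarrow> int \<Rightarrow> jpoly \<Rightarrow> jpoly \<Rightarrow> jpoly" where
  "RC1 k l f g = of_int k * f * serre g - of_int l * g * serre f"

definition poisson_bracket :: "(jpoly \<Rightarrow> jpoly \<Rightarrow> jpoly) \<Rightarrow> bool" where
  "poisson_bracket br \<longleftrightarrow>
     (\<forall>f g. in_Jt f \<longrightarrow> in_Jt g \<longrightarrow> in_Jt (br f g)) \<and>
     (\<forall>f g. in_Jt f \<longrightarrow> in_Jt g \<longrightarrow> br f g = - br g f) \<and>
     (\<forall>f g h. in_Jt f \<longrightarrow> in_Jt g \<longrightarrow> in_Jt h \<longrightarrow> br (f + g) h = br f h + br g h) \<and>
     (\<forall>f g h. in_Jt f \<longrightarrow> in_Jt g \<longrightarrow> in_Jt h \<longrightarrow> br h (f + g) = br h f + br h g) \<and>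
     (\<forall>c f h. in_Jt f \<longrightarrow> in_Jt h \<longrightarrow> br (Cst c * f) h = Cst c * br f h) \<and>
     (\<forall>c f h. in_Jt f \<longrightarrow> in_Jt h \<longrightarrow> br h (Cst c * f) = Cst c * br h f) \<and>
     (\<forall>f g h. in_Jt f \<longrightarrow> in_Jt g \<longrightarrow> in_Jt h \<longrightarrow> br (f * g) h = f * br g h + g * br f h) \<and>
     (\<forall>f g h. in_Jt f \<longrightarrow> in_Jt g \<longrightarrow> in_Jt h \<longrightarrow> br h (f * g) = f * br h g + g * br h f) \<and>
     (\<forall>f g h. in_Jt f \<longrightarrow> in_Jt g \<longrightarrow> in_Jt h \<longrightarrow>
        br f (br g h) + br g (br h f) + br h (br f g) = 0)"

definition admissible :: "(jpoly \<Rightarrow> jpoly \<Rightarrow> jpoly) \<Rightarrow> bool" where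
  "admissible br \<longleftrightarrow>
     (\<forall>k l f g. f \<in> Mk k \<longrightarrow> g \<in> Mk l \<longrightarrow> br f g = RC1 k l f g) \<and>
     (\<forall>k l p q f g. f \<in> Jt k p \<longrightarrow> g \<in> Jt l q \<longrightarrow> br f g \<in> Jt (k + l + 2) (p + q))"

definition param_families ::
  "complex \<Rightarrow> complex \<Rightarrow> complex \<Rightarrow> complex \<Rightarrow> complex \<Rightarrow> complex \<Rightarrow> complex \<Rightarrow> complex
    \<Rightarrow> complex \<Rightarrow> complex \<Rightarrow> bool" where
  "param_families \<alpha> \<beta> \<gamma> \<delta> lam \<mu> \<theta> \<epsilon> \<xi> \<eta> \<longleftrightarrow>
    (\<gamma> \<noteq> 0 \<and> \<alpha> = \<epsilon> \<and> \<beta> = 3/2 * \<epsilon> + 1 \<and> \<delta> = \<gamma> \<and> lam = 4 / \<gamma> \<and> \<mu> = 8 / \<gamma> \<and>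
       \<theta> = 3/2 * \<epsilon> - 1 \<and> \<xi> = 4 * \<epsilon> / \<gamma> \<and> \<eta> = (-3/4 * \<epsilon> + 1/2) * \<gamma>) \<or>
    (\<alpha> = \<epsilon> + 2/3 \<and> \<beta> = 3/2 * \<epsilon> + 1 \<and> \<delta> = 3/2 * \<gamma> \<and> \<mu> = 3/2 * lam \<and> \<theta> = 3/2 * \<epsilon> \<and>
       \<xi> = (3/4 * \<epsilon> + 1/2) * lam \<and> \<eta> = -3/4 * \<epsilon> * \<gamma>) \<or>
    (\<alpha> = 4 \<and> \<beta> = 6 \<and> \<gamma> \<noteq> 0 \<and> \<delta> = -\<gamma> \<and> lam = 0 \<and> \<mu> = 0 \<and> \<theta> = 0 \<and> \<epsilon> = 0 \<and> \<xi> = 0 \<and> \<eta> = 0) \<or>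
    (\<alpha> = 0 \<and> \<beta> = 0 \<and> \<gamma> = 0 \<and> \<delta> = 0 \<and> lam \<noteq> 0 \<and> \<mu> = -2 * lam \<and> \<theta> = 6 \<and> \<epsilon> = 4 \<and>
       \<xi> = 0 \<and> \<eta> = 0) \<or>
    (\<alpha> = \<epsilon> \<and> \<beta> = 3/2 * \<epsilon> \<and> \<gamma> = 0 \<and> \<delta> = 0 \<and> lam = 0 \<and> \<mu> = 0 \<and> \<theta> = 3/2 * \<epsilon> \<and> \<xi> = 0) \<or>
    (\<alpha> \<noteq> \<epsilon> + 2/3 \<and> \<beta> = 3/2 * \<alpha> \<and> \<gamma> = 0 \<and> \<delta> = 0 \<and> lam = 0 \<and> \<mu> = 0 \<and> \<theta> = 3/2 * \<epsilon> \<and>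
       \<xi> = 0 \<and> \<eta> = 0)"

end

theory Submission
  imports Defs
begin

text \<open>A biderivation of \<open>C[E4, E6, A, B]\<close> is determined by its values on the generators,
  \<open>{f, g} = \<Sum>\<^sub>i\<^sub>j \<partial>\<^sub>if \<partial>\<^sub>jg {x\<^sub>i, x\<^sub>j}\<close>. Condition (2) puts each bracket of two generators
  into a homogeneous component spanned by two monomials, which gives the ten parameters, and
  condition (1) forces \<open>{E4, E6} = RC1(E4, E6) = -2E4\<^sup>3 + 2E6\<^sup>2\<close>. Conversely, for brackets of
  this shape the expansion formula gives (2), and Euler's identity \<open>k f = 4E4 \<partial>f/\<partial>E4 + 6E6 \<partial>f/\<partial>E6\<close>
  on \<open>M\<^sub>k\<close> gives (1), whatever the parameters. So the parameters are constrained by the Jacobi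
  identity alone: comparing coefficients in the Jacobi identities of the four triples of distinct
  generators yields thirteen polynomial equations, and splitting on whether \<open>\<gamma>\<close> and \<open>\<lambda>\<close> vanish
  shows that their solutions are exactly the six families.\<close>

section \<open>Monomials\<close>

lemma poly_mapping_sum_single:
  "(f :: 'a \<Rightarrow>\<^sub>0 'b::comm_monoid_add)
     = (\<Sum>m\<in>Poly_Mapping.keys f. Poly_Mapping.single m (Poly_Mapping.lookup f m))"
proof (rule poly_mapping_eqI)
  fix k
  have "Poly_Mapping.lookup (\<Sum>m\<in>Poly_Mapping.keys f. Poly_Mapping.single m (Poly_Mapping.lookup f m)) k
     = (\<Sum>m\<in>Poly_Mapping.keys f. if k = m then Poly_Mapping.lookup f m else 0)"
    by (simp add: lookup_sum lookup_single when_def eq_commute)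
  also have "\<dots> = Poly_Mapping.lookup f k"
    by (simp add: sum.delta in_keys_iff)
  finally show "Poly_Mapping.lookup f k =
      Poly_Mapping.lookup (\<Sum>m\<in>Poly_Mapping.keys f. Poly_Mapping.single m (Poly_Mapping.lookup f m)) k"
    by simp
qed

lemma keys_add_canonically_ordered:
  "Poly_Mapping.keys ((a :: 'a \<Rightarrow>\<^sub>0 'b::canonically_ordered_monoid_add) + b)
     = Poly_Mapping.keys a \<union> Poly_Mapping.keys b"
  by (auto simp: in_keys_iff lookup_add)

lemma poly_mapping_two_keys:
  fixes f :: "'a \<Rightarrow>\<^sub>0 'b::comm_monoid_add"
  assumes "Poly_Mapping.keys f \<subseteq> {m1, m2}" "m1 \<noteq> m2"
  shows "f = Poly_Mapping.single m1 (Poly_Mapping.lookup f m1)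
           + Poly_Mapping.single m2 (Poly_Mapping.lookup f m2)"
proof -
  have "f = (\<Sum>m\<in>Poly_Mapping.keys f. Poly_Mapping.single m (Poly_Mapping.lookup f m))"
    by (rule poly_mapping_sum_single)
  also have "\<dots> = (\<Sum>m\<in>{m1,m2}. Poly_Mapping.single m (Poly_Mapping.lookup f m))"
    by (rule sum.mono_neutral_left) (use assms in \<open>auto simp: in_keys_iff\<close>)
  also have "\<dots> = Poly_Mapping.single m1 (Poly_Mapping.lookup f m1)
      + Poly_Mapping.single m2 (Poly_Mapping.lookup f m2)"
    using assms(2) by simp
  finally show ?thesis .
qed

lemma poly_mapping_eq_uminus_self_imp_zero: "(x :: 'a \<Rightarrow>\<^sub>0 'b::field_char_0) = - x \<Longrightarrow> x = 0"
proof (rule poly_mapping_eqI)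
  fix k assume "x = - x"
  then have "Poly_Mapping.lookup x k = - Poly_Mapping.lookup x k"
    by (metis lookup_uminus)
  then show "Poly_Mapping.lookup x k = Poly_Mapping.lookup 0 k"
    by simp
qed

definition mon :: "nat \<Rightarrow> nat \<Rightarrow> nat \<Rightarrow> nat \<Rightarrow> mono" where
  "mon a b c d = Poly_Mapping.single 0 a + Poly_Mapping.single 1 b + Poly_Mapping.single 2 c
     + Poly_Mapping.single 3 d"

lemma lookup_mon: "Poly_Mapping.lookup (mon a b c d) i =
   (if i = 0 then a else if i = 1 then b else if i = 2 then c else if i = 3 then d else 0)"
  by (simp add: mon_def lookup_add lookup_single)

lemma mon_eq_iff: "mon a b c d = mon a' b' c' d' \<longleftrightarrow> a = a' \<and> b = b' \<and> c = c' \<and> d = d'"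
proof
  assume "mon a b c d = mon a' b' c' d'"
  then have "\<And>i. Poly_Mapping.lookup (mon a b c d) i = Poly_Mapping.lookup (mon a' b' c' d') i"
    by simp
  from this[of 0] this[of 1] this[of 2] this[of 3] show "a = a' \<and> b = b' \<and> c = c' \<and> d = d'"
    by (simp add: lookup_mon)
qed simp

lemma mon_add: "mon a b c d + mon a' b' c' d' = mon (a + a') (b + b') (c + c') (d + d')"
  by (rule poly_mapping_eqI) (simp add: lookup_add lookup_mon)

lemma mon_zero: "mon 0 0 0 0 = 0"
  by (rule poly_mapping_eqI) (simp add: lookup_mon)

lemma keys_mon: "Poly_Mapping.keys (mon a b c d) \<subseteq> {0,1,2,3}"
  by (auto simp: in_keys_iff lookup_mon split: if_splits)

lemma mon_lookup_eq:
  assumes "Poly_Mapping.keys m \<subseteq> {0,1,2,3}"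
  shows "m = mon (Poly_Mapping.lookup m 0) (Poly_Mapping.lookup m 1) (Poly_Mapping.lookup m 2)
    (Poly_Mapping.lookup m 3)"
  by (rule poly_mapping_eqI) (use assms in \<open>auto simp: lookup_mon in_keys_iff\<close>)

lemma mon_minus_single:
  "mon a b c d - Poly_Mapping.single 0 1 = mon (a - 1) b c d"
  "mon a b c d - Poly_Mapping.single 1 1 = mon a (b - 1) c d"
  "mon a b c d - Poly_Mapping.single 2 1 = mon a b (c - 1) d"
  "mon a b c d - Poly_Mapping.single 3 1 = mon a b c (d - 1)"
  by (rule poly_mapping_eqI; simp add: lookup_mon lookup_minus lookup_single when_def)+

lemma mon_single:
  "mon 1 0 0 0 = Poly_Mapping.single 0 1" "mon 0 1 0 0 = Poly_Mapping.single 1 1"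
  "mon 0 0 1 0 = Poly_Mapping.single 2 1" "mon 0 0 0 1 = Poly_Mapping.single 3 1"
  by (rule poly_mapping_eqI; simp add: lookup_mon lookup_single when_def)+

lemma mweight_mon: "mweight (mon a b c d) = 4 * int a + 6 * int b - 2 * int c"
  by (simp add: mweight_def lookup_mon)

lemma mindex_mon: "mindex (mon a b c d) = c + d"
  by (simp add: mindex_def lookup_mon)

text \<open>\<open>cmon c a b d e\<close> is the term \<open>c E4^a E6^b A^d B^e\<close>.\<close>

definition cmon :: "complex \<Rightarrow> nat \<Rightarrow> nat \<Rightarrow> nat \<Rightarrow> nat \<Rightarrow> jpoly" where
  "cmon c a b d e = Poly_Mapping.single (mon a b d e) c"

lemma cmon_mult:
  "cmon c a b d e * cmon c' a' b' d' e' = cmon (c * c') (a + a') (b + b') (d + d') (e + e')"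
  by (simp add: cmon_def mult_single mon_add)

lemma cmon_add: "cmon c a b d e + cmon c' a b d e = cmon (c + c') a b d e"
  by (simp add: cmon_def single_add)

lemma cmon_uminus: "- cmon c a b d e = cmon (- c) a b d e"
  by (simp add: cmon_def single_uminus)

lemma cmon_zero: "cmon 0 a b d e = 0"
  by (simp add: cmon_def)

lemma lookup_cmon: "Poly_Mapping.lookup (cmon c a b d e) (mon a' b' d' e') =
    (if a = a' \<and> b = b' \<and> d = d' \<and> e = e' then c else 0)"
  by (simp add: cmon_def lookup_single mon_eq_iff)

lemma Var_cmon:
  "E4 = cmon 1 1 0 0 0" "E6 = cmon 1 0 1 0 0" "JA = cmon 1 0 0 1 0" "JB = cmon 1 0 0 0 1"
  unfolding cmon_def Var_def mon_single by simp_all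

lemma Cst_cmon: "Cst c = cmon c 0 0 0 0"
  by (simp add: cmon_def Cst_def mon_zero)

lemma constant_cmon:
  "(1 :: jpoly) = cmon 1 0 0 0 0" "(numeral n :: jpoly) = cmon (numeral n) 0 0 0 0"
  "(of_nat k :: jpoly) = cmon (of_nat k) 0 0 0 0" "(of_int i :: jpoly) = cmon (of_int i) 0 0 0 0"
  by (simp_all add: cmon_def mon_zero)

lemma cmon_power: "cmon c a b d e ^ n = cmon (c ^ n) (n * a) (n * b) (n * d) (n * e)"
  by (induction n) (simp_all add: constant_cmon(1) cmon_mult)

lemma Var_power: "Var i ^ n = Poly_Mapping.single (Poly_Mapping.single i n) 1"
proof (induction n)
  case (Suc n)
  have "Poly_Mapping.single i (Suc n) = Poly_Mapping.single i 1 + Poly_Mapping.single i n"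
    by (simp add: single_add[symmetric])
  then show ?case using Suc by (simp add: Var_def mult_single)
qed simp

lemma powers_eq_cmon: "E4 ^ a * E6 ^ b * JA ^ d * JB ^ e = cmon 1 a b d e"
  by (simp add: cmon_def Var_power mult_single mon_def)

lemma sum_lessThan_4: "(\<Sum>i<4. F i) = F 0 + F 1 + F 2 + F (3::nat)"
  by (simp add: eval_nat_numeral)

lemma lookup_Cst_mult: "Poly_Mapping.lookup (Cst c * p) m = c * Poly_Mapping.lookup p m"
  unfolding Cst_def mult_map_scale_conv_mult[symmetric] by (simp add: map.rep_eq when_def)

lemma lookup_numeral_mult:
  "Poly_Mapping.lookup (numeral n * (p::jpoly)) m = numeral n * Poly_Mapping.lookup p m"
  using lookup_Cst_mult[of "numeral n" p m] by (simp add: Cst_def)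

lemma pderiv_var_single: "pderiv_var i (Poly_Mapping.single m c) =
    Poly_Mapping.single (m - Poly_Mapping.single i 1) (of_nat (Poly_Mapping.lookup m i) * c)"
  by (simp add: pderiv_var_def)

lemma pderiv_var_eq_sum_single:
  "pderiv_var i f =
     (\<Sum>m\<in>Poly_Mapping.keys f. pderiv_var i (Poly_Mapping.single m (Poly_Mapping.lookup f m)))"
  unfolding pderiv_var_single by (simp add: pderiv_var_def)

lemma pderiv_var_cmon:
  "pderiv_var 0 (cmon c a b d e) = cmon (of_nat a * c) (a - 1) b d e"
  "pderiv_var 1 (cmon c a b d e) = cmon (of_nat b * c) a (b - 1) d e"
  "pderiv_var 2 (cmon c a b d e) = cmon (of_nat d * c) a b (d - 1) e"
  "pderiv_var 3 (cmon c a b d e) = cmon (of_nat e * c) a b d (e - 1)"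
  unfolding cmon_def pderiv_var_single mon_minus_single by (simp_all add: lookup_mon)

section \<open>Homogeneous components\<close>

lemma in_Jt_add: "in_Jt f \<Longrightarrow> in_Jt g \<Longrightarrow> in_Jt (f + g)"
  unfolding in_Jt_def using keys_add[of f g] by blast

lemma in_Jt_mult:
  assumes "in_Jt f" "in_Jt g"
  shows "in_Jt (f * g)"
  unfolding in_Jt_def
proof
  fix m assume "m \<in> Poly_Mapping.keys (f * g)"
  then obtain x y where "m = x + y" "x \<in> Poly_Mapping.keys f" "y \<in> Poly_Mapping.keys g"
    using keys_mult[of f g] by blast
  then show "Poly_Mapping.keys m \<subseteq> {0,1,2,3}"
    using assms unfolding in_Jt_def by (auto simp: keys_add_canonically_ordered)
qed

lemma in_Jt_uminus: "in_Jt f \<Longrightarrow> in_Jt (- f)"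
  unfolding in_Jt_def by simp

lemma in_Jt_zero: "in_Jt 0"
  unfolding in_Jt_def by simp

lemma in_Jt_single: "Poly_Mapping.keys m \<subseteq> {0,1,2,3} \<Longrightarrow> in_Jt (Poly_Mapping.single m c)"
  unfolding in_Jt_def by simp

lemma in_Jt_cmon: "in_Jt (cmon c a b d e)"
  unfolding cmon_def by (rule in_Jt_single[OF keys_mon])

lemma in_Jt_one: "in_Jt 1"
  by (simp add: constant_cmon in_Jt_cmon)

lemma in_Jt_Cst: "in_Jt (Cst c)"
  by (simp add: Cst_cmon in_Jt_cmon)

lemma in_Jt_Var: "in_Jt E4" "in_Jt E6" "in_Jt JA" "in_Jt JB"
  unfolding Var_cmon by (rule in_Jt_cmon)+

lemma in_Jt_Var_less: "i < 4 \<Longrightarrow> in_Jt (Var i)"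
  unfolding Var_def by (rule in_Jt_single) auto

lemma in_Jt_power: "in_Jt f \<Longrightarrow> in_Jt (f ^ n)"
  by (induction n) (simp_all add: in_Jt_one in_Jt_mult)

lemma in_Jt_sum: "(\<And>x. x \<in> S \<Longrightarrow> in_Jt (F x)) \<Longrightarrow> in_Jt (sum F S)"
  by (induction S rule: infinite_finite_induct) (simp_all add: in_Jt_zero in_Jt_add)

lemmas in_Jt_intros = in_Jt_add in_Jt_mult in_Jt_uminus in_Jt_zero in_Jt_cmon in_Jt_one in_Jt_Cst
  in_Jt_Var in_Jt_Var_less in_Jt_power


lemma cmon_in_Jt: "k = 4 * int a + 6 * int b - 2 * int d \<Longrightarrow> p = d + e \<Longrightarrow> cmon c a b d e \<in> Jt k p"
  unfolding Jt_def cmon_def using keys_mon[of a b d e] by (simp add: mweight_mon mindex_mon)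

lemma cmon_in_Mk: "cmon c a b 0 0 \<in> Mk (4 * int a + 6 * int b)"
proof -
  have "Poly_Mapping.keys (mon a b 0 0) \<subseteq> {0,1}"
    by (auto simp: in_keys_iff lookup_mon split: if_splits)
  then show ?thesis unfolding Mk_def cmon_def by (simp add: mweight_mon)
qed

lemma Var_in_Jt: "E4 \<in> Jt 4 0" "E6 \<in> Jt 6 0" "JA \<in> Jt (-2) 1" "JB \<in> Jt 0 1"
  unfolding Var_cmon by (simp_all add: cmon_in_Jt)

lemma Var_in_Mk: "E4 \<in> Mk 4" "E6 \<in> Mk 6"
  unfolding Var_cmon using cmon_in_Mk[of 1 1 0] cmon_in_Mk[of 1 0 1] by simp_all

lemma in_Jt_if_in_Jt_graded: "f \<in> Jt k p \<Longrightarrow> in_Jt f"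
  unfolding Jt_def in_Jt_def by auto

lemma in_Jt_if_in_Mk: "f \<in> Mk k \<Longrightarrow> in_Jt f"
  unfolding Mk_def in_Jt_def by auto

lemma Jt_zero: "0 \<in> Jt k p"
  unfolding Jt_def by simp

lemma Jt_add: "f \<in> Jt k p \<Longrightarrow> g \<in> Jt k p \<Longrightarrow> f + g \<in> Jt k p"
  unfolding Jt_def using keys_add[of f g] by blast

lemma Jt_uminus: "f \<in> Jt k p \<Longrightarrow> - f \<in> Jt k p"
  unfolding Jt_def by simp

lemma Jt_sum: "(\<And>x. x \<in> S \<Longrightarrow> F x \<in> Jt k p) \<Longrightarrow> sum F S \<in> Jt k p"
  by (induction S rule: infinite_finite_induct) (simp_all add: Jt_zero Jt_add)

lemma Jt_single:
  "Poly_Mapping.keys m \<subseteq> {0,1,2,3} \<Longrightarrow> Poly_Mapping.single m c \<in> Jt (mweight m) (mindex m)"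
  unfolding Jt_def by simp

lemma mweight_add: "mweight (x + y) = mweight x + mweight y"
  by (simp add: mweight_def lookup_add algebra_simps)

lemma mindex_add: "mindex (x + y) = mindex x + mindex y"
  by (simp add: mindex_def lookup_add)

lemma Jt_mult:
  assumes f: "f \<in> Jt k p" and g: "g \<in> Jt l q"
  shows "f * g \<in> Jt (k + l) (p + q)"
  unfolding Jt_def mem_Collect_eq
proof
  fix m assume "m \<in> Poly_Mapping.keys (f * g)"
  then obtain x y where xy: "m = x + y" "x \<in> Poly_Mapping.keys f" "y \<in> Poly_Mapping.keys g"
    using keys_mult[of f g] by blast
  have "Poly_Mapping.keys x \<subseteq> {0,1,2,3}" "mweight x = k" "mindex x = p"
    using f xy(2) unfolding Jt_def by auto
  moreover have "Poly_Mapping.keys y \<subseteq> {0,1,2,3}" "mweight y = l" "mindex y = q"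
    using g xy(3) unfolding Jt_def by auto
  ultimately show "Poly_Mapping.keys m \<subseteq> {0,1,2,3} \<and> mweight m = k + l \<and> mindex m = p + q"
    unfolding xy(1) keys_add_canonically_ordered mweight_add mindex_add by blast
qed

definition var_weight :: "nat \<Rightarrow> int" where
  "var_weight i = (if i = 0 then 4 else if i = 1 then 6 else if i = 2 then -2 else 0)"

definition var_index :: "nat \<Rightarrow> nat" where
  "var_index i = (if i = 2 \<or> i = 3 then 1 else 0)"

lemma mweight_mindex_minus_single:
  assumes "i < 4" "Poly_Mapping.lookup m i \<noteq> 0"
  shows "mweight m = mweight (m - Poly_Mapping.single i 1) + var_weight i"
    and "mindex m = mindex (m - Poly_Mapping.single i 1) + var_index i"
proof -
  have i: "i = 0 \<or> i = 1 \<or> i = 2 \<or> i = 3" using assms(1) by auto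
  show "mweight m = mweight (m - Poly_Mapping.single i 1) + var_weight i"
    using i assms(2) by (auto simp: mweight_def var_weight_def lookup_minus lookup_single)
  show "mindex m = mindex (m - Poly_Mapping.single i 1) + var_index i"
    using i assms(2) by (auto simp: mindex_def var_index_def lookup_minus lookup_single)
qed

lemma pderiv_var_mult_in_Jt:
  assumes f: "f \<in> Jt k p" and h: "h \<in> Jt (l + var_weight i) (q + var_index i)" and i: "i < 4"
  shows "pderiv_var i f * h \<in> Jt (k + l) (p + q)"
proof -
  have "pderiv_var i f * h = (\<Sum>m\<in>Poly_Mapping.keys f.
      Poly_Mapping.single (m - Poly_Mapping.single i 1)
        (of_nat (Poly_Mapping.lookup m i) * Poly_Mapping.lookup f m) * h)"
    unfolding pderiv_var_def by (simp add: sum_distrib_right)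
  also have "\<dots> \<in> Jt (k + l) (p + q)"
  proof (rule Jt_sum)
    fix m assume m: "m \<in> Poly_Mapping.keys f"
    have km: "Poly_Mapping.keys m \<subseteq> {0,1,2,3}" and w: "mweight m = k" and x: "mindex m = p"
      using f m unfolding Jt_def by auto
    show "Poly_Mapping.single (m - Poly_Mapping.single i 1)
        (of_nat (Poly_Mapping.lookup m i) * Poly_Mapping.lookup f m) * h \<in> Jt (k + l) (p + q)"
    proof (cases "Poly_Mapping.lookup m i = 0")
      case False
      have "Poly_Mapping.keys (m - Poly_Mapping.single i 1) \<subseteq> Poly_Mapping.keys m"
        by (auto simp: in_keys_iff lookup_minus)
      then have "Poly_Mapping.keys (m - Poly_Mapping.single i 1) \<subseteq> {0,1,2,3}"
        using km by blast
      from Jt_mult[OF Jt_single[OF this] h]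
      show ?thesis
        using mweight_mindex_minus_single[OF i False] w x by (simp add: algebra_simps)
    qed (simp add: Jt_zero)
  qed
  finally show ?thesis .
qed

lemma Jt_keys:
  assumes "f \<in> Jt k p" "m \<in> Poly_Mapping.keys f"
  obtains a b c d where "m = mon a b c d" "4 * int a + 6 * int b - 2 * int c = k" "c + d = p"
proof -
  have "Poly_Mapping.keys m \<subseteq> {0,1,2,3}" "mweight m = k" "mindex m = p"
    using assms unfolding Jt_def by auto
  with mon_lookup_eq[OF this(1)] that show ?thesis
    unfolding mweight_def mindex_def by blast
qed

lemma Jt_spanned_by_two_monomials:
  assumes f: "f \<in> Jt k p"
    and span: "\<And>a b d e. 4 * int a + 6 * int b - 2 * int d = k \<Longrightarrow> d + e = p \<Longrightarrow>
        (a, b, d, e) = (a1, b1, d1, e1) \<or> (a, b, d, e) = (a2, b2, d2, e2)"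
    and ne: "(a1, b1, d1, e1) \<noteq> (a2, b2, d2, e2)"
  shows "\<exists>c1 c2. f = cmon c1 a1 b1 d1 e1 + cmon c2 a2 b2 d2 e2"
proof (intro exI)
  have "Poly_Mapping.keys f \<subseteq> {mon a1 b1 d1 e1, mon a2 b2 d2 e2}"
  proof
    fix m assume "m \<in> Poly_Mapping.keys f"
    with f obtain a b d e
      where "m = mon a b d e" "4 * int a + 6 * int b - 2 * int d = k" "d + e = p"
      by (rule Jt_keys)
    then show "m \<in> {mon a1 b1 d1 e1, mon a2 b2 d2 e2}" using span by auto
  qed
  moreover have "mon a1 b1 d1 e1 \<noteq> mon a2 b2 d2 e2" using ne by (simp add: mon_eq_iff)
  ultimately show "f = cmon (Poly_Mapping.lookup f (mon a1 b1 d1 e1)) a1 b1 d1 e1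
      + cmon (Poly_Mapping.lookup f (mon a2 b2 d2 e2)) a2 b2 d2 e2"
    unfolding cmon_def by (rule poly_mapping_two_keys)
qed

lemma Mk_keys:
  assumes "f \<in> Mk k" "m \<in> Poly_Mapping.keys f"
  obtains a b where "m = mon a b 0 0" "k = 4 * int a + 6 * int b"
proof -
  have km: "Poly_Mapping.keys m \<subseteq> {0,1}" and w: "mweight m = k"
    using assms unfolding Mk_def by auto
  then have l: "Poly_Mapping.lookup m 2 = 0" "Poly_Mapping.lookup m 3 = 0"
    by (auto simp: in_keys_iff)
  show ?thesis
  proof (rule that)
    show "m = mon (Poly_Mapping.lookup m 0) (Poly_Mapping.lookup m 1) 0 0"
      using mon_lookup_eq[of m] km l by auto
    show "k = 4 * int (Poly_Mapping.lookup m 0) + 6 * int (Poly_Mapping.lookup m 1)"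
      using w l by (simp add: mweight_def)
  qed
qed

lemma Mk_pderiv_var_A_B: "f \<in> Mk k \<Longrightarrow> pderiv_var 2 f = 0" "f \<in> Mk k \<Longrightarrow> pderiv_var 3 f = 0"
  unfolding pderiv_var_def by (rule sum.neutral, auto elim: Mk_keys simp: lookup_mon)+

lemma Mk_euler_cmon:
  "4 * E4 * pderiv_var 0 (cmon c a b 0 0) + 6 * E6 * pderiv_var 1 (cmon c a b 0 0)
     = cmon ((4 * of_nat a + 6 * of_nat b) * c) a b 0 0"
proof -
  have 1: "4 * E4 * cmon (of_nat a * c) (a - 1) b 0 0 = cmon (4 * of_nat a * c) a b 0 0"
    unfolding Var_cmon constant_cmon by (cases a) (simp_all add: cmon_mult cmon_zero algebra_simps)
  have 2: "6 * E6 * cmon (of_nat b * c) a (b - 1) 0 0 = cmon (6 * of_nat b * c) a b 0 0"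
    unfolding Var_cmon constant_cmon by (cases b) (simp_all add: cmon_mult cmon_zero algebra_simps)
  show ?thesis unfolding pderiv_var_cmon 1 2 cmon_add by (simp add: algebra_simps)
qed

lemma Mk_euler:
  assumes f: "f \<in> Mk k"
  shows "of_int k * f = 4 * E4 * pderiv_var 0 f + 6 * E6 * pderiv_var 1 f"
proof -
  let ?s = "\<lambda>m. Poly_Mapping.single m (Poly_Mapping.lookup f m)"
  have "of_int k * f = (\<Sum>m\<in>Poly_Mapping.keys f. of_int k * ?s m)"
    by (subst poly_mapping_sum_single[of f]) (simp add: sum_distrib_left)
  also have "\<dots> =
      (\<Sum>m\<in>Poly_Mapping.keys f. 4 * E4 * pderiv_var 0 (?s m) + 6 * E6 * pderiv_var 1 (?s m))"
  proof (rule sum.cong[OF refl])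
    fix m assume "m \<in> Poly_Mapping.keys f"
    with f obtain a b where m: "m = mon a b 0 0" and k: "k = 4 * int a + 6 * int b"
      by (rule Mk_keys)
    have s: "?s m = cmon (Poly_Mapping.lookup f m) a b 0 0"
      unfolding cmon_def m ..
    show "of_int k * ?s m = 4 * E4 * pderiv_var 0 (?s m) + 6 * E6 * pderiv_var 1 (?s m)"
      unfolding s Mk_euler_cmon constant_cmon(4) cmon_mult k by simp
  qed
  also have "\<dots> = 4 * E4 * pderiv_var 0 f + 6 * E6 * pderiv_var 1 f"
    unfolding pderiv_var_eq_sum_single[of _ f] by (simp add: sum.distrib sum_distrib_left)
  finally show ?thesis .
qed

section \<open>Biderivations\<close>

locale poisson =
  fixes br :: "jpoly \<Rightarrow> jpoly \<Rightarrow> jpoly"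
  assumes poisson_bracket: "poisson_bracket br"
begin

lemma br_skew: "in_Jt f \<Longrightarrow> in_Jt g \<Longrightarrow> br f g = - br g f"
  using poisson_bracket unfolding poisson_bracket_def by meson

lemma br_add_left: "in_Jt f \<Longrightarrow> in_Jt g \<Longrightarrow> in_Jt h \<Longrightarrow> br (f + g) h = br f h + br g h"
  using poisson_bracket unfolding poisson_bracket_def by meson

lemma br_add_right: "in_Jt f \<Longrightarrow> in_Jt g \<Longrightarrow> in_Jt h \<Longrightarrow> br h (f + g) = br h f + br h g"
  using poisson_bracket unfolding poisson_bracket_def by meson

lemma br_Cst_mult_left: "in_Jt f \<Longrightarrow> in_Jt h \<Longrightarrow> br (Cst c * f) h = Cst c * br f h"
  using poisson_bracket unfolding poisson_bracket_def by meson

lemma br_mult_left: "in_Jt f \<Longrightarrow> in_Jt g \<Longrightarrow> in_Jt h \<Longrightarrow> br (f * g) h = f * br g h + g * br f h"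
  using poisson_bracket unfolding poisson_bracket_def by meson

lemma br_jacobi:
  "in_Jt f \<Longrightarrow> in_Jt g \<Longrightarrow> in_Jt h \<Longrightarrow> br f (br g h) + br g (br h f) + br h (br f g) = 0"
  using poisson_bracket unfolding poisson_bracket_def by meson

lemma br_self: "in_Jt f \<Longrightarrow> br f f = 0"
  using br_skew[of f f] poly_mapping_eq_uminus_self_imp_zero by blast

lemma br_zero_left: "in_Jt h \<Longrightarrow> br 0 h = 0"
  using br_add_left[of 0 0 h] in_Jt_zero by simp

lemma br_zero_right: "in_Jt h \<Longrightarrow> br h 0 = 0"
  using br_add_right[of 0 0 h] in_Jt_zero by simp

lemma br_uminus_right: "in_Jt f \<Longrightarrow> in_Jt h \<Longrightarrow> br h (- f) = - br h f"
  using br_add_right[of "- f" f h] br_zero_right[of h]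
  by (simp add: in_Jt_uminus eq_neg_iff_add_eq_0)

lemma br_one_left: "in_Jt h \<Longrightarrow> br 1 h = 0"
  using br_mult_left[OF in_Jt_one in_Jt_one, of h] by simp

lemma br_sum_left:
  "finite S \<Longrightarrow> (\<And>x. x \<in> S \<Longrightarrow> in_Jt (F x)) \<Longrightarrow> in_Jt h \<Longrightarrow> br (sum F S) h = (\<Sum>x\<in>S. br (F x) h)"
  by (induction S rule: finite_induct) (simp_all add: br_zero_left br_add_left in_Jt_sum)

lemma br_power_left: "in_Jt x \<Longrightarrow> in_Jt h \<Longrightarrow> br (x ^ n) h = of_nat n * x ^ (n - 1) * br x h"
proof (induction n)
  case (Suc n)
  have "br (x ^ Suc n) h = x * br (x ^ n) h + x ^ n * br x h"
    using br_mult_left[OF Suc.prems(1) in_Jt_power[OF Suc.prems(1)] Suc.prems(2)] by simp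
  also have "\<dots> = of_nat (Suc n) * x ^ (Suc n - 1) * br x h"
    using Suc by (cases n) (simp_all add: algebra_simps)
  finally show ?case .
qed (simp add: br_one_left)

lemma br_powers_left:
  assumes h: "in_Jt h"
  shows "br (E4 ^ a * E6 ^ b * JA ^ d * JB ^ e) h =
      of_nat a * (E4 ^ (a - 1) * E6 ^ b * JA ^ d * JB ^ e) * br E4 h
    + of_nat b * (E4 ^ a * E6 ^ (b - 1) * JA ^ d * JB ^ e) * br E6 h
    + of_nat d * (E4 ^ a * E6 ^ b * JA ^ (d - 1) * JB ^ e) * br JA h
    + of_nat e * (E4 ^ a * E6 ^ b * JA ^ d * JB ^ (e - 1)) * br JB h"
proof -
  note J = in_Jt_intros h
  have "br (E4 ^ a * E6 ^ b * JA ^ d * JB ^ e) h = E4 ^ a * E6 ^ b * JA ^ d * br (JB ^ e) h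
      + JB ^ e * (E4 ^ a * E6 ^ b * br (JA ^ d) h
        + JA ^ d * (E4 ^ a * br (E6 ^ b) h + E6 ^ b * br (E4 ^ a) h))"
    by (simp add: br_mult_left J)
  then show ?thesis
    by (simp add: br_power_left J algebra_simps)
qed

lemma br_cmon_left:
  assumes h: "in_Jt h"
  shows "br (cmon c a b d e) h = (\<Sum>i<4. pderiv_var i (cmon c a b d e) * br (Var i) h)"
proof -
  have "br (cmon c a b d e) h = Cst c * br (E4 ^ a * E6 ^ b * JA ^ d * JB ^ e) h"
    unfolding powers_eq_cmon
    using br_Cst_mult_left[OF in_Jt_cmon h, of c 1 a b d e] by (simp add: Cst_cmon cmon_mult)
  also have "\<dots> = (\<Sum>i<4. pderiv_var i (cmon c a b d e) * br (Var i) h)"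
    unfolding br_powers_left[OF h] unfolding sum_lessThan_4 pderiv_var_cmon powers_eq_cmon
    by (simp add: distrib_left mult.assoc[symmetric] Cst_cmon constant_cmon cmon_mult
        mult.commute[where 'a = complex])
  finally show ?thesis .
qed

lemma br_expand_left:
  assumes f: "in_Jt f" and h: "in_Jt h"
  shows "br f h = (\<Sum>i<4. pderiv_var i f * br (Var i) h)"
proof -
  let ?s = "\<lambda>m. Poly_Mapping.single m (Poly_Mapping.lookup f m)"
  have km: "Poly_Mapping.keys m \<subseteq> {0,1,2,3}" if "m \<in> Poly_Mapping.keys f" for m
    using f that unfolding in_Jt_def by blast
  have in_Jt_s: "in_Jt (?s m)" if "m \<in> Poly_Mapping.keys f" for m
    using in_Jt_single[OF km[OF that]] .
  have cmon_s: "?s m = cmon (Poly_Mapping.lookup f m) (Poly_Mapping.lookup m 0)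
      (Poly_Mapping.lookup m 1) (Poly_Mapping.lookup m 2) (Poly_Mapping.lookup m 3)" if "m \<in> Poly_Mapping.keys f" for m
    unfolding cmon_def using mon_lookup_eq[OF km[OF that]] by simp
  have "br f h = br (\<Sum>m\<in>Poly_Mapping.keys f. ?s m) h"
    by (subst poly_mapping_sum_single[of f]) (rule refl)
  also have "\<dots> = (\<Sum>m\<in>Poly_Mapping.keys f. br (?s m) h)"
    by (rule br_sum_left) (simp_all add: h in_Jt_s)
  also have "\<dots> = (\<Sum>m\<in>Poly_Mapping.keys f. \<Sum>i<4. pderiv_var i (?s m) * br (Var i) h)"
    by (rule sum.cong) (simp_all add: cmon_s br_cmon_left h)
  also have "\<dots> = (\<Sum>i<4. pderiv_var i f * br (Var i) h)"
    unfolding pderiv_var_eq_sum_single[of _ f] sum_distrib_right by (rule sum.swap)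
  finally show ?thesis .
qed

lemma br_expand_right:
  assumes f: "in_Jt f" and h: "in_Jt h"
  shows "br f h = (\<Sum>j<4. pderiv_var j h * br f (Var j))"
proof -
  have "br f h = - (\<Sum>j<4. pderiv_var j h * br (Var j) f)"
    using br_skew[OF f h] br_expand_left[OF h f] by simp
  also have "\<dots> = (\<Sum>j<4. pderiv_var j h * br f (Var j))"
    by (simp add: sum_negf[symmetric] br_skew[OF f] in_Jt_Var_less)
  finally show ?thesis .
qed

lemma br_expand:
  assumes "in_Jt f" "in_Jt g"
  shows "br f g = (\<Sum>i<4. \<Sum>j<4. pderiv_var i f * pderiv_var j g * br (Var i) (Var j))"
  using br_expand_left[OF assms] br_expand_right[OF in_Jt_Var_less assms(2)]
  by (simp add: sum_distrib_left mult.assoc)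

lemma br_cmon_right:
  "in_Jt f \<Longrightarrow> br f (cmon c a b d e) =
      cmon (of_nat a * c) (a - 1) b d e * br f E4 + cmon (of_nat b * c) a (b - 1) d e * br f E6
    + cmon (of_nat d * c) a b (d - 1) e * br f JA + cmon (of_nat e * c) a b d (e - 1) * br f JB"
  using br_expand_right[of f "cmon c a b d e"] unfolding sum_lessThan_4 pderiv_var_cmon
  by (simp add: in_Jt_cmon)

end

section \<open>The Jacobi equations\<close>

text \<open>The parameters \<open>al, \<dots>, et\<close> are \<open>\<alpha>, \<beta>, \<gamma>, \<delta>, \<lambda>, \<mu>, \<theta>, \<epsilon>, \<xi>, \<eta>\<close>. The equations are the
  coefficients of \<open>E4\<^sup>3B, E6\<^sup>2B, E4\<^sup>2E6A\<close> in the Jacobi identity for \<open>(E4, E6, A)\<close>, of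
  \<open>E4\<^sup>4A, E4E6\<^sup>2A, E4\<^sup>2E6B\<close> for \<open>(E4, E6, B)\<close>, of \<open>E4E6A\<^sup>2, E4\<^sup>2AB, E6B\<^sup>2\<close> for \<open>(E4, A, B)\<close>
  and of \<open>E4\<^sup>3A\<^sup>2, E6\<^sup>2A\<^sup>2, E4E6AB, E4\<^sup>2B\<^sup>2\<close> for \<open>(E6, A, B)\<close>.\<close>

definition jacobi_system ::
  "complex \<Rightarrow> complex \<Rightarrow> complex \<Rightarrow> complex \<Rightarrow> complex \<Rightarrow> complex \<Rightarrow> complex \<Rightarrow> complex
    \<Rightarrow> complex \<Rightarrow> complex \<Rightarrow> bool" where
  "jacobi_system al be ga de la mu th ep xi et \<longleftrightarrow>
     2*de + be*ga - 4*ga - ga*th = 0 \<and> 2*de + de*ep - 2*ga - al*de = 0 \<and>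
       de*la - ga*mu - 6*al + 4*be = 0 \<and>
     2*mu + la*th - 2*la - be*la = 0 \<and> 2*mu + al*mu - 4*la - mu*ep = 0 \<and>
       ga*mu - de*la - 6*ep + 4*th = 0 \<and>
     - al*xi + 2*al*la + ep*xi - al*mu = 0 \<and> - 2*ga*xi - 2*la*et + ga*la + be*ep - al*th = 0 \<and>
       - ep*et + de*ep - ga*ep + al*et = 0 \<and>
     2*xi - be*xi + be*mu + th*xi - 2*be*la = 0 \<and> - 2*xi + al*mu = 0 \<and>
       - 2*de*xi - 2*mu*et + ga*mu + 2*al*th - 2*be*ep = 0 \<and> - th*et + 2*ga*th - de*th + be*et = 0"

lemma jacobi_systemD:
  assumes "jacobi_system al be ga de la mu th ep xi et"
  shows "2*de + be*ga - 4*ga - ga*th = 0" "2*de + de*ep - 2*ga - al*de = 0"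
    "de*la - ga*mu - 6*al + 4*be = 0"
    "2*mu + la*th - 2*la - be*la = 0" "2*mu + al*mu - 4*la - mu*ep = 0"
    "ga*mu - de*la - 6*ep + 4*th = 0"
    "- al*xi + 2*al*la + ep*xi - al*mu = 0" "- 2*ga*xi - 2*la*et + ga*la + be*ep - al*th = 0"
    "- ep*et + de*ep - ga*ep + al*et = 0"
    "2*xi - be*xi + be*mu + th*xi - 2*be*la = 0" "- 2*xi + al*mu = 0"
    "- 2*de*xi - 2*mu*et + ga*mu + 2*al*th - 2*be*ep = 0" "- th*et + 2*ga*th - de*th + be*et = 0"
  using assms unfolding jacobi_system_def by blast+

lemma jacobi_system_linear_part:
  assumes "jacobi_system al be ga de la mu th ep xi et"
  shows "4*be = 6*al + (ga*mu - de*la)" "4*th = 6*ep - (ga*mu - de*la)" "2*xi = al*mu"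
  using jacobi_systemD(3,6,11)[OF assms] by algebra+

lemma param_families_B:
  assumes sys: "jacobi_system al be ga de la mu th ep xi et"
    and D: "al - ep = 2/3" and s: "be - th = 1"
  shows "param_families al be ga de la mu th ep xi et"
proof -
  note e = jacobi_systemD[OF sys] and lin = jacobi_system_linear_part[OF sys]
  have al: "al = ep + 2/3" using D by algebra
  have K: "ga*mu - de*la = 0" using lin(1,2) D s by algebra
  have "be = 3/2*ep + 1" "th = 3/2*ep" using lin(1,2) K al by algebra+
  moreover have "de = 3/2*ga" using e(1) s by algebra
  moreover have "mu = 3/2*la" using e(4) s by algebra
  moreover have "xi = (3/4*ep + 1/2)*la" using lin(3) al \<open>mu = 3/2*la\<close> by algebra
  moreover have "et = -3/4*ep*ga" using e(9) al \<open>de = 3/2*ga\<close> by algebra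
  ultimately show ?thesis
    unfolding param_families_def using al by blast
qed

lemma param_families_if_gamma_lambda_zero:
  assumes sys: "jacobi_system al be ga de la mu th ep xi et" and ga: "ga = 0" and la: "la = 0"
  shows "param_families al be ga de la mu th ep xi et"
proof -
  note e = jacobi_systemD[OF sys] and lin = jacobi_system_linear_part[OF sys]
  have de: "de = 0" using e(1) ga by algebra
  have mu: "mu = 0" using e(4) la by algebra
  have be: "be = 3/2*al" and th: "th = 3/2*ep" and xi: "xi = 0"
    using lin ga de la mu by algebra+
  have "(al - ep) * et = 0" using e(9) ga de by algebra
  then consider "al = ep" | "et = 0" by auto
  then show ?thesis
  proof cases
    case 1
    then show ?thesis unfolding param_families_def using ga de la mu be th xi by simp
  next
    case 2
    show ?thesis
    proof (cases "al - ep = 2/3")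
      case True
      moreover have "be - th = 1" using True be th by algebra
      ultimately show ?thesis by (rule param_families_B[OF sys])
    next
      case False
      then have "al \<noteq> ep + 2/3" by auto
      then show ?thesis unfolding param_families_def using 2 ga de la mu be th xi by simp
    qed
  qed
qed

lemma param_families_if_gamma_zero_lambda_nonzero:
  assumes sys: "jacobi_system al be ga de la mu th ep xi et" and ga: "ga = 0" and la: "la \<noteq> 0"
  shows "param_families al be ga de la mu th ep xi et"
proof -
  note e = jacobi_systemD[OF sys] and lin = jacobi_system_linear_part[OF sys]
  define D where "D = al - ep"
  have de: "de = 0" using e(1) ga by algebra
  have be: "be = 3/2*al" and th: "th = 3/2*ep" using lin(1,2) ga de by algebra+
  have m1: "2*mu = la*(2 + 3/2*D)" using e(4) be th unfolding D_def by algebra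
  have m2: "mu*(2 + D) = 4*la" using e(5) unfolding D_def by algebra
  have "la * ((3*D - 2)*(D + 4)) = 0" using m1 m2 by algebra
  then have "3*D - 2 = 0 \<or> D + 4 = 0" using la by simp
  then consider "D = 2/3" | "D = -4" by (auto simp: field_simps add_eq_0_iff2)
  then show ?thesis
  proof cases
    case 1
    moreover have "be - th = 1" using 1 be th unfolding D_def by algebra
    ultimately show ?thesis using param_families_B[OF sys] unfolding D_def by blast
  next
    case 2
    have mu: "mu = -2*la" using m1 2 by algebra
    have "la * al = 0" using e(10) lin(3) mu be th 2 unfolding D_def by algebra
    then have al: "al = 0" using la by simp
    have ep: "ep = 4" using 2 al unfolding D_def by algebra
    have et: "et = 0" using e(8) ga al be ep la by algebra
    show ?thesis unfolding param_families_def using ga de la mu be th lin(3) al ep et by simp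
  qed
qed

lemma param_families_if_lambda_zero_gamma_nonzero:
  assumes sys: "jacobi_system al be ga de la mu th ep xi et" and ga: "ga \<noteq> 0" and la: "la = 0"
  shows "param_families al be ga de la mu th ep xi et"
proof -
  note e = jacobi_systemD[OF sys] and lin = jacobi_system_linear_part[OF sys]
  define D where "D = al - ep"
  have mu: "mu = 0" using e(4) la by algebra
  have be: "be = 3/2*al" and th: "th = 3/2*ep" and xi: "xi = 0" using lin la mu by algebra+
  have d1: "2*de = ga*(4 - 3/2*D)" using e(1) be th unfolding D_def by algebra
  have d2: "de*(2 - D) = 2*ga" using e(2) unfolding D_def by algebra
  have "ga * ((3*D - 2)*(D - 4)) = 0" using d1 d2 by algebra
  then have "3*D - 2 = 0 \<or> D - 4 = 0" using ga by simp
  then consider "D = 2/3" | "D = 4" by (auto simp: field_simps)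
  then show ?thesis
  proof cases
    case 1
    moreover have "be - th = 1" using 1 be th unfolding D_def by algebra
    ultimately show ?thesis using param_families_B[OF sys] unfolding D_def by blast
  next
    case 2
    have de: "de = -ga" using d1 2 by algebra
    have "4*et = 2*ga*ep" and "6*et + 9/2*ga*ep = 0"
      using e(9) e(13) de be th 2 unfolding D_def by algebra+
    then have "ga*ep = 0" by algebra
    then have ep: "ep = 0" using ga by simp
    have et: "et = 0" using \<open>4*et = 2*ga*ep\<close> ep by algebra
    have al: "al = 4" using 2 ep unfolding D_def by simp
    show ?thesis unfolding param_families_def using ga la mu be th xi al ep et de by simp
  qed
qed

text \<open>Eliminating \<open>\<delta>\<close> and \<open>\<mu>\<close> from the first two equations of the triples \<open>(E4, E6, A)\<close> and
  \<open>(E4, E6, B)\<close> leaves two conics in \<open>D = \<alpha> - \<epsilon>\<close>, \<open>s = \<beta> - \<theta>\<close>, meeting in two points.\<close>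

lemma jacobi_system_generic_cases:
  assumes sys: "jacobi_system al be ga de la mu th ep xi et" and ga: "ga \<noteq> 0" and la: "la \<noteq> 0"
  shows "(al - ep = 0 \<and> be - th = 2) \<or> (al - ep = 2/3 \<and> be - th = 1)"
proof -
  note e = jacobi_systemD[OF sys]
  define D where "D = al - ep"
  define s where "s = be - th"
  have "ga * ((4 - s)*(2 - D) - 4) = 0" using e(1,2) unfolding D_def s_def by algebra
  then have q1: "(4 - s)*(2 - D) - 4 = 0" using ga by simp
  have "la * ((2 + s)*(2 + D) - 8) = 0" using e(4,5) unfolding D_def s_def by algebra
  then have q2: "(2 + s)*(2 + D) - 8 = 0" using la by simp
  have sD: "4*s = 8 - 6*D" using q1 q2 by algebra
  have "2*D*(2 - 3*D) = 0" using q2 sD by algebra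
  then have "D = 0 \<or> D = 2/3" by (auto simp: field_simps)
  moreover have "s = 2" if "D = 0" using sD that by algebra
  moreover have "s = 1" if "D = 2/3" using sD that by algebra
  ultimately show ?thesis unfolding D_def s_def by blast
qed

lemma param_families_A:
  assumes sys: "jacobi_system al be ga de la mu th ep xi et"
    and ga: "ga \<noteq> 0" and D: "al - ep = 0" and s: "be - th = 2"
  shows "param_families al be ga de la mu th ep xi et"
proof -
  note e = jacobi_systemD[OF sys] and lin = jacobi_system_linear_part[OF sys]
  have K: "ga*mu - de*la = 4" using lin(1,2) D s by algebra
  have de: "de = ga" using e(1) s by algebra
  have mu: "mu = 2*la" using e(4) s by algebra
  have "ga*la = 4" using K de mu by (simp add: algebra_simps)
  then have la: "la = 4/ga" and mu': "mu = 8/ga" using ga mu by (simp_all add: field_simps)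
  have al: "al = ep" using D by algebra
  have be: "be = 3/2*ep + 1" and th: "th = 3/2*ep - 1" using lin(1,2) K al by algebra+
  have xi: "xi = 4*ep/ga" using lin(3) al mu' ga by (simp add: field_simps)
  have et: "et = (-3/4*ep + 1/2)*ga" using e(13) s de th by algebra
  show ?thesis unfolding param_families_def using ga al be de la mu' th xi et by blast
qed

lemma param_families_if_jacobi_system:
  assumes sys: "jacobi_system al be ga de la mu th ep xi et"
  shows "param_families al be ga de la mu th ep xi et"
proof -
  consider "ga = 0" "la = 0" | "ga = 0" "la \<noteq> 0" | "ga \<noteq> 0" "la = 0" | "ga \<noteq> 0" "la \<noteq> 0"
    by blast
  then show ?thesis
  proof cases
    case 1
    then show ?thesis by (rule param_families_if_gamma_lambda_zero[OF sys])
  next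
    case 2
    then show ?thesis by (rule param_families_if_gamma_zero_lambda_nonzero[OF sys])
  next
    case 3
    then show ?thesis by (rule param_families_if_lambda_zero_gamma_nonzero[OF sys])
  next
    case 4
    then show ?thesis
      using jacobi_system_generic_cases[OF sys] param_families_A[OF sys] param_families_B[OF sys]
      by blast
  qed
qed

section \<open>Admissible brackets\<close>

lemma generator_bracket_cmon_forms:
  "- 2 * E4 ^ 3 + 2 * E6 ^ 2 = cmon (-2) 3 0 0 0 + cmon 2 0 2 0 0"
  "Cst al * E6 * JA + Cst ga * E4 * JB = cmon al 0 1 1 0 + cmon ga 1 0 0 1"
  "Cst be * E4 ^ 2 * JA + Cst de * E6 * JB = cmon be 2 0 1 0 + cmon de 0 1 0 1"
  "Cst la * E4 ^ 2 * JA + Cst ep * E6 * JB = cmon la 2 0 1 0 + cmon ep 0 1 0 1"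
  "Cst mu * E4 * E6 * JA + Cst th * E4 ^ 2 * JB = cmon mu 1 1 1 0 + cmon th 2 0 0 1"
  "Cst xi * E4 * JA ^ 2 + Cst et * JB ^ 2 = cmon xi 1 0 2 0 + cmon et 0 0 0 2"
  unfolding Var_cmon Cst_cmon constant_cmon
  by (simp_all add: cmon_mult cmon_uminus cmon_power numeral_2_eq_2[symmetric] del: One_nat_def)

lemma RC1_E4_E6: "RC1 4 6 E4 E6 = - 2 * E4 ^ 3 + 2 * E6 ^ 2"
  unfolding generator_bracket_cmon_forms(1) RC1_def serre_def Var_cmon Cst_cmon constant_cmon
  by (simp add: pderiv_var_cmon cmon_mult cmon_zero cmon_uminus cmon_power diff_conv_add_uminus
      numeral_2_eq_2[symmetric] del: One_nat_def)

text \<open>With \<open>f\<^sub>i = \<partial>f/\<partial>E\<^sub>i\<close> and Euler's identity \<open>k f = 4 E4 f\<^sub>0 + 6 E6 f\<^sub>1\<close>, the bracket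
  \<open>(f\<^sub>0 g\<^sub>1 - f\<^sub>1 g\<^sub>0) {E4, E6}\<close> of two modular forms is \<open>RC1\<close>; \<open>u, v\<close> stand for the
  coefficients \<open>-1/3, -1/2\<close> of the Serre derivation.\<close>

lemma rankin_cohen_identity:
  fixes u v :: "'a::comm_ring_1"
  assumes "3*u = -1" "2*v = -1"
  shows "(f0 * g1 - f1 * g0) * (- 2 * E ^ 3 + 2 * F ^ 2) =
    (4*E*f0 + 6*F*f1) * (g0 * u * F + g1 * v * E^2) - (4*E*g0 + 6*F*g1) * (f0 * u * F + f1 * v * E^2)"
proof -
  have "(4*E*f0 + 6*F*f1) * (g0 * u * F + g1 * v * E^2) - (4*E*g0 + 6*F*g1) * (f0 * u * F + f1 * v * E^2)
      = (f0 * g1 - f1 * g0) * (2 * (2*v) * E^3 - 2 * (3*u) * F^2)"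
    by (simp add: algebra_simps power2_eq_square power3_eq_cube)
  then show ?thesis using assms by simp
qed

context poisson
begin

lemma jacobi_system_if_generator_brackets:
  assumes "br E4 E6 = cmon (-2) 3 0 0 0 + cmon 2 0 2 0 0"
    and "br JA E4 = cmon al 0 1 1 0 + cmon ga 1 0 0 1"
    and "br JA E6 = cmon be 2 0 1 0 + cmon de 0 1 0 1"
    and "br JB E4 = cmon la 2 0 1 0 + cmon ep 0 1 0 1"
    and "br JB E6 = cmon mu 1 1 1 0 + cmon th 2 0 0 1"
    and "br JA JB = cmon xi 1 0 2 0 + cmon et 0 0 0 2"
  shows "jacobi_system al be ga de la mu th ep xi et"
proof -
  note V = in_Jt_Var
  have self: "br E4 E4 = 0" "br E6 E6 = 0" "br JA JA = 0" "br JB JB = 0"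
    by (rule br_self, rule V)+
  have skew: "br E6 E4 = - br E4 E6" "br E4 JA = - br JA E4" "br E6 JA = - br JA E6"
     "br E4 JB = - br JB E4" "br E6 JB = - br JB E6" "br JB JA = - br JA JB"
    by (rule br_skew, rule V, rule V)+
  have jacobi: "Poly_Mapping.lookup (br x (br y z) + br y (br z x) + br z (br x y)) m = 0"
    if "in_Jt x" "in_Jt y" "in_Jt z" for x y z m
    using br_jacobi[OF that] by simp
  show ?thesis
    unfolding jacobi_system_def
    using jacobi[OF V(1,2,3), of "mon 3 0 0 1"] jacobi[OF V(1,2,3), of "mon 0 2 0 1"]
      jacobi[OF V(1,2,3), of "mon 2 1 1 0"]
      jacobi[OF V(1,2,4), of "mon 4 0 1 0"] jacobi[OF V(1,2,4), of "mon 1 2 1 0"]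
      jacobi[OF V(1,2,4), of "mon 2 1 0 1"]
      jacobi[OF V(1,3,4), of "mon 1 1 2 0"] jacobi[OF V(1,3,4), of "mon 2 0 1 1"]
      jacobi[OF V(1,3,4), of "mon 0 1 0 2"]
      jacobi[OF V(2,3,4), of "mon 3 0 2 0"] jacobi[OF V(2,3,4), of "mon 0 2 2 0"]
      jacobi[OF V(2,3,4), of "mon 1 1 1 1"] jacobi[OF V(2,3,4), of "mon 2 0 0 2"]
    by (simp add: self skew[unfolded assms] assms br_add_right br_uminus_right br_cmon_right
        in_Jt_intros cmon_mult cmon_uminus lookup_add lookup_cmon lookup_numeral_mult
        distrib_left distrib_right algebra_simps del: One_nat_def)
qed

lemma generator_brackets_if_admissible:
  assumes "admissible br"
  shows "\<exists>\<alpha> \<beta> \<gamma> \<delta> lam \<mu> \<theta> \<epsilon> \<xi> \<eta>. param_families \<alpha> \<beta> \<gamma> \<delta> lam \<mu> \<theta> \<epsilon> \<xi> \<eta> \<and>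
       br E4 E6 = - 2 * E4 ^ 3 + 2 * E6 ^ 2 \<and>
       br JA E4 = Cst \<alpha> * E6 * JA + Cst \<gamma> * E4 * JB \<and>
       br JA E6 = Cst \<beta> * E4 ^ 2 * JA + Cst \<delta> * E6 * JB \<and>
       br JB E4 = Cst lam * E4 ^ 2 * JA + Cst \<epsilon> * E6 * JB \<and>
       br JB E6 = Cst \<mu> * E4 * E6 * JA + Cst \<theta> * E4 ^ 2 * JB \<and>
       br JA JB = Cst \<xi> * E4 * JA ^ 2 + Cst \<eta> * JB ^ 2"
proof -
  have RC: "\<And>k l f g. f \<in> Mk k \<Longrightarrow> g \<in> Mk l \<Longrightarrow> br f g = RC1 k l f g"
    and graded: "\<And>k l p q f g. f \<in> Jt k p \<Longrightarrow> g \<in> Jt l q \<Longrightarrow> br f g \<in> Jt (k + l + 2) (p + q)"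
    using assms unfolding admissible_def by blast+
  have h01: "br E4 E6 = - 2 * E4 ^ 3 + 2 * E6 ^ 2"
    using RC[OF Var_in_Mk] RC1_E4_E6 by simp
  have "\<exists>al ga. br JA E4 = cmon al 0 1 1 0 + cmon ga 1 0 0 1"
    by (rule Jt_spanned_by_two_monomials[OF graded[OF Var_in_Jt(3,1)]]) (simp, presburger, simp)
  then obtain al ga where h20: "br JA E4 = cmon al 0 1 1 0 + cmon ga 1 0 0 1" by blast
  have "\<exists>be de. br JA E6 = cmon be 2 0 1 0 + cmon de 0 1 0 1"
    by (rule Jt_spanned_by_two_monomials[OF graded[OF Var_in_Jt(3,2)]]) (simp, presburger, simp)
  then obtain be de where h21: "br JA E6 = cmon be 2 0 1 0 + cmon de 0 1 0 1" by blast
  have "\<exists>la ep. br JB E4 = cmon la 2 0 1 0 + cmon ep 0 1 0 1"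
    by (rule Jt_spanned_by_two_monomials[OF graded[OF Var_in_Jt(4,1)]]) (simp, presburger, simp)
  then obtain la ep where h30: "br JB E4 = cmon la 2 0 1 0 + cmon ep 0 1 0 1" by blast
  have "\<exists>mu th. br JB E6 = cmon mu 1 1 1 0 + cmon th 2 0 0 1"
    by (rule Jt_spanned_by_two_monomials[OF graded[OF Var_in_Jt(4,2)]]) (simp, presburger, simp)
  then obtain mu th where h31: "br JB E6 = cmon mu 1 1 1 0 + cmon th 2 0 0 1" by blast
  have "\<exists>xi et. br JA JB = cmon xi 1 0 2 0 + cmon et 0 0 0 2"
    by (rule Jt_spanned_by_two_monomials[OF graded[OF Var_in_Jt(3,4)]]) (simp, presburger, simp)
  then obtain xi et where h23: "br JA JB = cmon xi 1 0 2 0 + cmon et 0 0 0 2" by blast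
  have "jacobi_system al be ga de la mu th ep xi et"
    by (rule jacobi_system_if_generator_brackets[OF h01[unfolded generator_bracket_cmon_forms(1)]
          h20 h21 h30 h31 h23])
  then have "param_families al be ga de la mu th ep xi et"
    by (rule param_families_if_jacobi_system)
  then show ?thesis
    unfolding generator_bracket_cmon_forms(2-6) using h01 h20 h21 h30 h31 h23
    by (intro exI conjI) assumption+
qed

lemma br_in_Jt_if_generators_in_Jt:
  assumes gen: "\<And>i j. i < 4 \<Longrightarrow> j < 4 \<Longrightarrow>
      br (Var i) (Var j) \<in> Jt (var_weight i + var_weight j + 2) (var_index i + var_index j)"
    and f: "f \<in> Jt k p" and g: "g \<in> Jt l q"
  shows "br f g \<in> Jt (k + l + 2) (p + q)"
proof -
  have "br f g = (\<Sum>i<4. \<Sum>j<4. pderiv_var i f * (pderiv_var j g * br (Var i) (Var j)))"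
    using br_expand[OF in_Jt_if_in_Jt_graded[OF f] in_Jt_if_in_Jt_graded[OF g]]
    by (simp add: mult.assoc)
  also have "\<dots> \<in> Jt (k + l + 2) (p + q)"
  proof (intro Jt_sum)
    fix i j :: nat assume "i \<in> {..<4}" "j \<in> {..<4}"
    then have ij: "i < 4" "j < 4" by auto
    have "br (Var i) (Var j) \<in> Jt ((var_weight i + 2) + var_weight j) (var_index i + var_index j)"
      using gen[OF ij] by (simp add: ac_simps)
    from pderiv_var_mult_in_Jt[OF g this ij(2)]
    have "pderiv_var j g * br (Var i) (Var j) \<in> Jt ((l + 2) + var_weight i) (q + var_index i)"
      by (simp add: ac_simps)
    from pderiv_var_mult_in_Jt[OF f this ij(1)]
    show "pderiv_var i f * (pderiv_var j g * br (Var i) (Var j)) \<in> Jt (k + l + 2) (p + q)"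
      by (simp add: ac_simps)
  qed
  finally show ?thesis .
qed

lemma br_Var_in_Jt_if_generator_brackets:
  assumes "br E4 E6 = cmon (-2) 3 0 0 0 + cmon 2 0 2 0 0"
    and "br JA E4 = cmon al 0 1 1 0 + cmon ga 1 0 0 1"
    and "br JA E6 = cmon be 2 0 1 0 + cmon de 0 1 0 1"
    and "br JB E4 = cmon la 2 0 1 0 + cmon ep 0 1 0 1"
    and "br JB E6 = cmon mu 1 1 1 0 + cmon th 2 0 0 1"
    and "br JA JB = cmon xi 1 0 2 0 + cmon et 0 0 0 2"
    and ij: "i < 4" "j < 4"
  shows "br (Var i) (Var j) \<in> Jt (var_weight i + var_weight j + 2) (var_index i + var_index j)"
proof -
  let ?P = "\<lambda>i j.
    br (Var i) (Var j) \<in> Jt (var_weight i + var_weight j + 2) (var_index i + var_index j)"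
  have diag: "?P i i" if "i < 4" for i
    using br_self[OF in_Jt_Var_less[OF that]] by (simp add: Jt_zero)
  have swap: "?P j i" if "?P i j" "i < 4" "j < 4" for i j
    using Jt_uminus[OF that(1)] br_skew[OF in_Jt_Var_less in_Jt_Var_less, OF that(3,2)]
    by (simp add: ac_simps)
  have gen: "?P 0 1" "?P 2 0" "?P 2 1" "?P 3 0" "?P 3 1" "?P 2 3"
    unfolding assms(1-6)
    by (intro Jt_add cmon_in_Jt; simp add: var_weight_def var_index_def)+
  have "i = 0 \<or> i = 1 \<or> i = 2 \<or> i = 3" "j = 0 \<or> j = 1 \<or> j = 2 \<or> j = 3"
    using ij by auto
  then show ?thesis
    using diag gen swap[OF gen(1)] swap[OF gen(2)] swap[OF gen(3)] swap[OF gen(4)] swap[OF gen(5)]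
      swap[OF gen(6)]
    by auto
qed

lemma br_Mk_eq_RC1:
  assumes h01: "br E4 E6 = - 2 * E4 ^ 3 + 2 * E6 ^ 2" and f: "f \<in> Mk k" and g: "g \<in> Mk l"
  shows "br f g = RC1 k l f g"
proof -
  have "br f g = (\<Sum>i<4. \<Sum>j<4. pderiv_var i f * pderiv_var j g * br (Var i) (Var j))"
    by (rule br_expand[OF in_Jt_if_in_Mk[OF f] in_Jt_if_in_Mk[OF g]])
  also have "\<dots> = (pderiv_var 0 f * pderiv_var 1 g - pderiv_var 1 f * pderiv_var 0 g) * br E4 E6"
    unfolding sum_lessThan_4 Mk_pderiv_var_A_B[OF f] Mk_pderiv_var_A_B[OF g]
    using br_self[OF in_Jt_Var(1)] br_self[OF in_Jt_Var(2)] br_skew[OF in_Jt_Var(2,1)]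
    by (simp add: algebra_simps del: One_nat_def)
  also have "\<dots> = RC1 k l f g"
  proof -
    have u: "3 * Cst (-1/3) = (-1::jpoly)" and v: "2 * Cst (-1/2) = (-1::jpoly)"
      unfolding Cst_cmon constant_cmon cmon_uminus by (simp_all add: cmon_mult)
    show ?thesis
      unfolding RC1_def serre_def Mk_euler[OF f] Mk_euler[OF g] h01
      by (rule rankin_cohen_identity[OF u v])
  qed
  finally show ?thesis .
qed

lemma admissible_if_generator_brackets:
  assumes "br E4 E6 = - 2 * E4 ^ 3 + 2 * E6 ^ 2"
    and "br JA E4 = Cst al * E6 * JA + Cst ga * E4 * JB"
    and "br JA E6 = Cst be * E4 ^ 2 * JA + Cst de * E6 * JB"
    and "br JB E4 = Cst la * E4 ^ 2 * JA + Cst ep * E6 * JB"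
    and "br JB E6 = Cst mu * E4 * E6 * JA + Cst th * E4 ^ 2 * JB"
    and "br JA JB = Cst xi * E4 * JA ^ 2 + Cst et * JB ^ 2"
  shows "admissible br"
  unfolding admissible_def
  using br_Mk_eq_RC1[OF assms(1)]
    br_in_Jt_if_generators_in_Jt[OF br_Var_in_Jt_if_generator_brackets[
        OF assms[unfolded generator_bracket_cmon_forms]]]
  by blast

end

theorem mainTheorem7:
  fixes br :: "jpoly \<Rightarrow> jpoly \<Rightarrow> jpoly"
  assumes "poisson_bracket br"
  shows "admissible br \<longleftrightarrow>
    (\<exists>\<alpha> \<beta> \<gamma> \<delta> lam \<mu> \<theta> \<epsilon> \<xi> \<eta>. param_families \<alpha> \<beta> \<gamma> \<delta> lam \<mu> \<theta> \<epsilon> \<xi> \<eta> \<and>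
       br E4 E6 = - 2 * E4 ^ 3 + 2 * E6 ^ 2 \<and>
       br JA E4 = Cst \<alpha> * E6 * JA + Cst \<gamma> * E4 * JB \<and>
       br JA E6 = Cst \<beta> * E4 ^ 2 * JA + Cst \<delta> * E6 * JB \<and>
       br JB E4 = Cst lam * E4 ^ 2 * JA + Cst \<epsilon> * E6 * JB \<and>
       br JB E6 = Cst \<mu> * E4 * E6 * JA + Cst \<theta> * E4 ^ 2 * JB \<and>
       br JA JB = Cst \<xi> * E4 * JA ^ 2 + Cst \<eta> * JB ^ 2)"
proof -
  interpret poisson br by (rule poisson.intro) (rule assms)
  show ?thesis
    using generator_brackets_if_admissible admissible_if_generator_brackets by blast
qed

end
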